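(* Let $\theta\sim G$ with bounded support and let $Y$, taking countably many values, have conditional probability mass function $f_\theta$ given $\theta$; let $Y_1,\dots,Y_n$ be i.i.d. with mass function $p_y=P_G(Y=y)=\int f_\theta(y)\,dG(\theta)$. For a sequence $\varepsilon_n\to0$ let $S_n=S_n(\varepsilon_n)=\{y: p_y\ge \varepsilon_n/n\}$, and assume: (i) $P_G(Y\in S_n)=1-o(1/n)$; (ii) for $\varepsilon_n\to0$ sufficiently slowly, $|S_n|=O(\log n)$. Let $n_y=\#\{i:Y_i=y\}$ and $\hat p_y=n_y/n$. Then for every $\alpha>0$, $$\sum_y n_y\log\frac{\hat p_y}{p_y}=o_p\big((\log n)^{1+\alpha}\big).$$
   Context: $\hat F_n$ denotes the empirical distribution of $Y_1,\dots,Y_n$ (the nonparametric MLE); the left-hand side is the log-likelihood ratio $\sum_i\log\big(P_{\hat F_n}(Y_i)/P_G(Y_i)\big)$. Conditions (i)–(ii) are the paper's assumption on $G$ (stated in terms of "an $o(1)$ function"), which the paper notes holds in its binomial and Poisson sampling scenarios e.g. when the support of $G$ is bounded. *)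

theory Defs
  imports "HOL-Probability.Probability" "HOL-Library.Landau_Symbols"
begin

definition iid_sample :: "'y pmf \<Rightarrow> nat \<Rightarrow> (nat \<Rightarrow> 'y) pmf" where
  "iid_sample P n = Pi_pmf {..<n} undefined (\<lambda>_. P)"

definition count_obs :: "nat \<Rightarrow> (nat \<Rightarrow> 'y) \<Rightarrow> 'y \<Rightarrow> nat" where
  "count_obs n \<omega> y = card {i \<in> {..<n}. \<omega> i = y}"

text \<open>Log-likelihood ratio sum_y n_y log(phat_y / p_y), phat_y = n_y/n; terms with n_y = 0
  vanish, so the sum is over the observed values.\<close>
definition loglik_ratio :: "'y pmf \<Rightarrow> nat \<Rightarrow> (nat \<Rightarrow> 'y) \<Rightarrow> real" where
  "loglik_ratio P n \<omega> =
     (\<Sum>y \<in> \<omega> ` {..<n}. real (count_obs n \<omega> y) *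
        ln ((real (count_obs n \<omega> y) / real n) / pmf P y))"

end

theory Submission
  imports Defs "HOL-Real_Asymp.Real_Asymp"
begin

text \<open>
  Write \<open>n\<^sub>y\<close> for the counts and let \<open>S\<close> be a finite set of values of positive mass.
  From \<open>1 - 1/x \<le> ln x \<le> x - 1\<close>,
  \<open>n\<^sub>y - n p\<^sub>y \<le> n\<^sub>y ln (n\<^sub>y / (n p\<^sub>y)) \<le> (n\<^sub>y - n p\<^sub>y)\<^sup>2 / (n p\<^sub>y) + n\<^sub>y - n p\<^sub>y\<close>.
  Summed over the observed values, the left bound is \<open>n (1 - P(observed values)) \<ge> 0\<close>;
  if all observations lie in \<open>S\<close>, the right bound is at most Pearson's statistic on \<open>S\<close>
  plus \<open>n P(Y \<notin> S)\<close>. Each \<open>n\<^sub>y\<close> is binomial, so each Pearson term has mean \<open>1 - p\<^sub>y\<close>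
  and Markov's inequality bounds the probability that the statistic exceeds \<open>t\<close> by \<open>|S|/t\<close>;
  a union bound controls the event that some observation falls outside \<open>S\<close>. For \<open>S = S\<^sub>n\<close>,
  \<open>|S\<^sub>n| = O(log n)\<close> and \<open>t = \<delta> (log n)\<^bsup>1+\<alpha>\<^esup>\<close> both contributions vanish.
\<close>

lemma expectation_binomial_pmf_Suc:
  fixes g :: "nat \<Rightarrow> real"
  assumes p: "p \<in> {0..1}"
  shows "measure_pmf.expectation (binomial_pmf (Suc n) p) g =
           p * measure_pmf.expectation (binomial_pmf n p) (\<lambda>k. g (k + 1))
         + (1 - p) * measure_pmf.expectation (binomial_pmf n p) g"
proof -
  have "binomial_pmf (Suc n) p =
          bernoulli_pmf p \<bind> (\<lambda>b. map_pmf (\<lambda>k. (if b then 1 else 0) + k) (binomial_pmf n p))"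
    using p by (simp add: binomial_pmf_Suc map_pmf_def)
  also have "measure_pmf.expectation \<dots> g =
      (\<Sum>b\<in>UNIV. pmf (bernoulli_pmf p) b *\<^sub>R
         measure_pmf.expectation (map_pmf (\<lambda>k. (if b then 1 else 0) + k) (binomial_pmf n p)) g)"
    using p by (intro pmf_expectation_bind) (auto intro!: finite_imageI)
  finally show ?thesis
    using p by (simp add: UNIV_bool add.commute)
qed

lemma expectation_binomial_pmf_real:
  "p \<in> {0..1} \<Longrightarrow> measure_pmf.expectation (binomial_pmf n p) real = real n * p"
proof (induction n)
  case 0
  then show ?case by (simp add: binomial_pmf_0)
next
  case (Suc n)
  have "measure_pmf.expectation (binomial_pmf n p) (\<lambda>k. real (k + 1)) =
          measure_pmf.expectation (binomial_pmf n p) real + 1"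
    using Suc.prems by (simp add: Bochner_Integration.integral_add)
  then show ?case
    using Suc by (simp add: expectation_binomial_pmf_Suc algebra_simps)
qed

lemma expectation_binomial_pmf_square:
  "p \<in> {0..1} \<Longrightarrow>
     measure_pmf.expectation (binomial_pmf n p) (\<lambda>k. (real k)\<^sup>2) = real n * p * (1 - p) + (real n * p)\<^sup>2"
proof (induction n)
  case 0
  then show ?case by (simp add: binomial_pmf_0)
next
  case (Suc n)
  have "measure_pmf.expectation (binomial_pmf n p) (\<lambda>k. (real (k + 1))\<^sup>2) =
          measure_pmf.expectation (binomial_pmf n p) (\<lambda>k. (real k)\<^sup>2)
        + 2 * measure_pmf.expectation (binomial_pmf n p) real + 1"
    using Suc.prems by (simp add: power2_eq_square algebra_simps Bochner_Integration.integral_add)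
  then show ?case
    using Suc expectation_binomial_pmf_real[OF Suc.prems, of n]
    by (simp add: expectation_binomial_pmf_Suc algebra_simps power2_eq_square)
qed

lemma variance_binomial_pmf:
  assumes p: "p \<in> {0..1}"
  shows "measure_pmf.expectation (binomial_pmf n p) (\<lambda>k. (real k - real n * p)\<^sup>2) = real n * p * (1 - p)"
proof -
  have "(\<lambda>k. (real k - real n * p)\<^sup>2) = (\<lambda>k. (real k)\<^sup>2 + (- 2 * real n * p) * real k + (real n * p)\<^sup>2)"
    by (auto simp: power2_eq_square algebra_simps)
  then show ?thesis
    using p expectation_binomial_pmf_real[OF p, of n] expectation_binomial_pmf_square[OF p, of n]
    by (simp add: Bochner_Integration.integral_add power2_eq_square algebra_simps)
qed

lemma map_pmf_eq_bernoulli_pmf: "map_pmf (\<lambda>z. z = y) P = bernoulli_pmf (pmf P y)"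
proof (rule pmf_eqI)
  fix b :: bool
  have "{z. (z = y) = b} = (if b then {y} else - {y})"
    by auto
  then show "pmf (map_pmf (\<lambda>z. z = y) P) b = pmf (bernoulli_pmf (pmf P y)) b"
    using measure_pmf.prob_compl[of "{y}" P]
    by (simp add: pmf_map vimage_def measure_pmf_single pmf_le_1 Compl_eq_Diff_UNIV)
qed

lemma map_pmf_count_obs_iid_sample:
  "map_pmf (\<lambda>\<omega>. count_obs n \<omega> y) (iid_sample P n) = binomial_pmf n (pmf P y)"
proof -
  have "binomial_pmf n (pmf P y) =
          map_pmf (\<lambda>b. card {i\<in>{..<n}. b i}) (Pi_pmf {..<n} (undefined = y) (\<lambda>_. bernoulli_pmf (pmf P y)))"
    by (rule binomial_pmf_altdef') (auto simp: pmf_le_1)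
  also have "Pi_pmf {..<n} (undefined = y) (\<lambda>_. bernoulli_pmf (pmf P y)) =
               map_pmf (\<lambda>\<omega>. (\<lambda>z. z = y) \<circ> \<omega>) (Pi_pmf {..<n} undefined (\<lambda>_. P))"
    unfolding map_pmf_eq_bernoulli_pmf[symmetric] by (rule Pi_pmf_map) auto
  finally show ?thesis
    by (simp add: pmf.map_comp o_def iid_sample_def count_obs_def)
qed

lemma map_pmf_component_iid_sample:
  "i < n \<Longrightarrow> map_pmf (\<lambda>\<omega>. \<omega> i) (iid_sample P n) = P"
  unfolding iid_sample_def by (subst Pi_pmf_component) auto

lemma count_obs_pos: "y \<in> \<omega> ` {..<n} \<Longrightarrow> count_obs n \<omega> y > 0"
  unfolding count_obs_def by (auto simp: card_gt_0_iff)

lemma count_obs_eq_0: "y \<notin> \<omega> ` {..<n} \<Longrightarrow> count_obs n \<omega> y = 0"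
  unfolding count_obs_def by auto

lemma sum_count_obs: "(\<Sum>y\<in>\<omega> ` {..<n}. real (count_obs n \<omega> y)) = real n"
proof -
  have "card {..<n} = card (\<Union>y\<in>\<omega> ` {..<n}. {i\<in>{..<n}. \<omega> i = y})"
    by (rule arg_cong[where f = card]) auto
  also have "\<dots> = (\<Sum>y\<in>\<omega> ` {..<n}. count_obs n \<omega> y)"
    unfolding count_obs_def by (rule card_UN_disjoint) auto
  finally show ?thesis
    by (simp flip: of_nat_sum)
qed

lemma mult_ln_ratio_ge:
  fixes c m :: real
  assumes "c > 0" "m > 0"
  shows "c - m \<le> c * ln (c / m)"
proof -
  have "ln (m / c) \<le> m / c - 1"
    using assms by (intro ln_le_minus_one) simp
  then have "c * (1 - m / c) \<le> c * ln (c / m)"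
    using assms by (intro mult_left_mono) (auto simp: ln_div)
  then show ?thesis
    using assms by (simp add: right_diff_distrib)
qed

lemma mult_ln_ratio_le:
  fixes c m :: real
  assumes "c > 0" "m > 0"
  shows "c * ln (c / m) \<le> (c - m)\<^sup>2 / m + (c - m)"
proof -
  have "c * ln (c / m) \<le> c * (c / m - 1)"
    using assms by (intro mult_left_mono ln_le_minus_one) auto
  also have "\<dots> = (c - m)\<^sup>2 / m + (c - m)"
    using assms by (simp add: field_simps power2_eq_square)
  finally show ?thesis .
qed

definition pearson_stat :: "'y pmf \<Rightarrow> nat \<Rightarrow> 'y set \<Rightarrow> (nat \<Rightarrow> 'y) \<Rightarrow> real" where
  "pearson_stat P n S \<omega> =
     (\<Sum>y\<in>S. (real (count_obs n \<omega> y) - real n * pmf P y)\<^sup>2 / (real n * pmf P y))"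

lemma loglik_ratio_nonneg:
  assumes n: "n > 0" and pos: "\<forall>i<n. pmf P (\<omega> i) > 0"
  shows "0 \<le> loglik_ratio P n \<omega>"
proof -
  let ?O = "\<omega> ` {..<n}" and ?c = "\<lambda>y. real (count_obs n \<omega> y)"
  have "?c y - real n * pmf P y \<le> ?c y * ln (?c y / real n / pmf P y)" if "y \<in> ?O" for y
    using mult_ln_ratio_ge[of "?c y" "real n * pmf P y"] count_obs_pos[OF that] n pos that
    by (auto simp: divide_divide_eq_left)
  then have "(\<Sum>y\<in>?O. ?c y - real n * pmf P y) \<le> loglik_ratio P n \<omega>"
    unfolding loglik_ratio_def by (rule sum_mono)
  moreover have "(\<Sum>y\<in>?O. ?c y - real n * pmf P y) = real n * (1 - measure_pmf.prob P ?O)"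
    by (simp add: sum_subtractf sum_count_obs measure_measure_pmf_finite sum_distrib_left algebra_simps)
  moreover have "0 \<le> real n * (1 - measure_pmf.prob P ?O)"
    by simp
  ultimately show ?thesis
    by linarith
qed

lemma loglik_ratio_le_pearson_stat:
  assumes n: "n > 0" and S: "finite S" and pos: "\<forall>y\<in>S. pmf P y > 0" and in_S: "\<forall>i<n. \<omega> i \<in> S"
  shows "loglik_ratio P n \<omega> \<le> pearson_stat P n S \<omega> + real n * measure_pmf.prob P (- S)"
proof -
  let ?O = "\<omega> ` {..<n}" and ?c = "\<lambda>y. real (count_obs n \<omega> y)"
  let ?d = "\<lambda>y. ?c y - real n * pmf P y"
  have O_S: "?O \<subseteq> S"
    using in_S by auto
  have "?c y * ln (?c y / real n / pmf P y) \<le> (?d y)\<^sup>2 / (real n * pmf P y) + ?d y" if "y \<in> ?O" for y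
    using mult_ln_ratio_le[of "?c y" "real n * pmf P y"] count_obs_pos[OF that] n pos O_S that
    by (auto simp: divide_divide_eq_left)
  then have "loglik_ratio P n \<omega> \<le> (\<Sum>y\<in>?O. (?d y)\<^sup>2 / (real n * pmf P y) + ?d y)"
    unfolding loglik_ratio_def by (rule sum_mono)
  also have "\<dots> = (\<Sum>y\<in>S. (?d y)\<^sup>2 / (real n * pmf P y) + ?d y)"
    using n pos by (intro sum.mono_neutral_left[OF S O_S]) (auto simp: count_obs_eq_0 power2_eq_square)
  also have "\<dots> = pearson_stat P n S \<omega> + (\<Sum>y\<in>S. ?c y) - real n * (\<Sum>y\<in>S. pmf P y)"
    by (simp add: pearson_stat_def sum.distrib sum_subtractf sum_distrib_left)
  also have "(\<Sum>y\<in>S. ?c y) = real n"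
    using sum.mono_neutral_right[OF S O_S, of ?c] by (simp add: count_obs_eq_0 sum_count_obs)
  also have "(\<Sum>y\<in>S. pmf P y) = 1 - measure_pmf.prob P (- S)"
    using S measure_pmf.prob_compl[of S P]
    by (simp add: measure_measure_pmf_finite Compl_eq_Diff_UNIV)
  finally show ?thesis
    by (simp add: algebra_simps)
qed

lemma integrable_count_obs:
  "integrable (measure_pmf (iid_sample P n)) (\<lambda>\<omega>. g (count_obs n \<omega> y) :: real)"
proof -
  have "integrable (measure_pmf (binomial_pmf n (pmf P y))) g"
    by (rule integrable_binomial_pmf) (auto simp: pmf_le_1)
  then show ?thesis
    by (simp flip: map_pmf_count_obs_iid_sample add: integrable_map_pmf_eq)
qed

lemma expectation_pearson_stat_le:
  assumes S: "finite S" and n: "n > 0" and pos: "\<forall>y\<in>S. pmf P y > 0"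
  shows "measure_pmf.expectation (iid_sample P n) (pearson_stat P n S) \<le> real (card S)"
proof -
  have pearson_term: "measure_pmf.expectation (iid_sample P n)
         (\<lambda>\<omega>. (real (count_obs n \<omega> y) - real n * pmf P y)\<^sup>2 / (real n * pmf P y)) = 1 - pmf P y"
    if "y \<in> S" for y
  proof -
    have "measure_pmf.expectation (iid_sample P n) (\<lambda>\<omega>. (real (count_obs n \<omega> y) - real n * pmf P y)\<^sup>2) =
          measure_pmf.expectation (map_pmf (\<lambda>\<omega>. count_obs n \<omega> y) (iid_sample P n))
            (\<lambda>k. (real k - real n * pmf P y)\<^sup>2)"
      by simp
    also have "\<dots> = real n * pmf P y * (1 - pmf P y)"
      unfolding map_pmf_count_obs_iid_sample by (rule variance_binomial_pmf) (auto simp: pmf_le_1)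
    finally have "measure_pmf.expectation (iid_sample P n)
        (\<lambda>\<omega>. (real (count_obs n \<omega> y) - real n * pmf P y)\<^sup>2) = real n * pmf P y * (1 - pmf P y)" .
    moreover have "pmf P y \<noteq> 0"
      using that pos by auto
    ultimately show ?thesis
      using n by simp
  qed
  have "measure_pmf.expectation (iid_sample P n) (pearson_stat P n S) =
          (\<Sum>y\<in>S. measure_pmf.expectation (iid_sample P n)
             (\<lambda>\<omega>. (real (count_obs n \<omega> y) - real n * pmf P y)\<^sup>2 / (real n * pmf P y)))"
    unfolding pearson_stat_def by (rule Bochner_Integration.integral_sum) (rule integrable_count_obs)
  also have "\<dots> = (\<Sum>y\<in>S. 1 - pmf P y)"
    by (rule sum.cong[OF refl]) (rule pearson_term)
  also have "\<dots> \<le> real (card S)"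
    using sum_mono[of S "\<lambda>y. 1 - pmf P y" "\<lambda>_. 1"] by simp
  finally show ?thesis .
qed

lemma prob_iid_sample_not_in_le:
  "measure_pmf.prob (iid_sample P n) {\<omega>. \<exists>i<n. \<omega> i \<notin> S} \<le> real n * measure_pmf.prob P (- S)"
proof -
  have "{\<omega>. \<exists>i<n. \<omega> i \<notin> S} = (\<Union>i<n. (\<lambda>\<omega>. \<omega> i) -` (- S))"
    by auto
  then have "measure_pmf.prob (iid_sample P n) {\<omega>. \<exists>i<n. \<omega> i \<notin> S}
      \<le> (\<Sum>i<n. measure_pmf.prob (map_pmf (\<lambda>\<omega>. \<omega> i) (iid_sample P n)) (- S))"
    by (simp add: measure_pmf.finite_measure_subadditive_finite measure_map_pmf)
  also have "\<dots> = real n * measure_pmf.prob P (- S)"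
    by (simp add: map_pmf_component_iid_sample)
  finally show ?thesis .
qed

lemma prob_pearson_stat_ge_le:
  assumes S: "finite S" and n: "n > 0" and pos: "\<forall>y\<in>S. pmf P y > 0" and c: "c > 0"
  shows "measure_pmf.prob (iid_sample P n) {\<omega>. pearson_stat P n S \<omega> \<ge> c} \<le> real (card S) / c"
proof -
  let ?M = "iid_sample P n"
  have "integrable ?M (pearson_stat P n S)"
    unfolding pearson_stat_def by (intro Bochner_Integration.integrable_sum integrable_count_obs)
  moreover have "AE \<omega> in ?M. 0 \<le> pearson_stat P n S \<omega>"
    using pos by (auto simp: pearson_stat_def intro!: sum_nonneg)
  ultimately have "measure_pmf.prob ?M {\<omega>. pearson_stat P n S \<omega> \<ge> c}
      \<le> measure_pmf.expectation ?M (pearson_stat P n S) / c"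
    using integral_Markov_inequality_measure[of ?M "pearson_stat P n S" UNIV c] c by simp
  also have "\<dots> \<le> real (card S) / c"
    using c by (intro divide_right_mono expectation_pearson_stat_le S n pos) auto
  finally show ?thesis .
qed

lemma abs_loglik_ratio_le_pearson_stat:
  assumes n: "n > 0" and S: "finite S" and pos: "\<forall>y\<in>S. pmf P y > 0" and in_S: "\<forall>i<n. \<omega> i \<in> S"
  shows "\<bar>loglik_ratio P n \<omega>\<bar> \<le> pearson_stat P n S \<omega> + real n * measure_pmf.prob P (- S)"
proof -
  have "0 \<le> loglik_ratio P n \<omega>"
    using pos in_S by (intro loglik_ratio_nonneg[OF n]) auto
  then show ?thesis
    using loglik_ratio_le_pearson_stat[OF n S pos in_S] by simp
qed

lemma prob_loglik_ratio_gt_le: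
  fixes t :: real
  assumes n: "n > 0" and S: "finite S" and pos: "\<forall>y\<in>S. pmf P y > 0"
    and t: "t > real n * measure_pmf.prob P (- S)"
  shows "measure_pmf.prob (iid_sample P n) {\<omega>. \<bar>loglik_ratio P n \<omega>\<bar> > t}
     \<le> real n * measure_pmf.prob P (- S) + real (card S) / (t - real n * measure_pmf.prob P (- S))"
proof -
  define a where "a = real n * measure_pmf.prob P (- S)"
  let ?M = "iid_sample P n"
  have "{\<omega>. \<bar>loglik_ratio P n \<omega>\<bar> > t} \<subseteq> {\<omega>. \<exists>i<n. \<omega> i \<notin> S} \<union> {\<omega>. pearson_stat P n S \<omega> \<ge> t - a}"
    using abs_loglik_ratio_le_pearson_stat[OF n S pos] unfolding a_def by fastforce
  then have "measure_pmf.prob ?M {\<omega>. \<bar>loglik_ratio P n \<omega>\<bar> > t}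
      \<le> measure_pmf.prob ?M ({\<omega>. \<exists>i<n. \<omega> i \<notin> S} \<union> {\<omega>. pearson_stat P n S \<omega> \<ge> t - a})"
    by (intro measure_pmf.finite_measure_mono) auto
  also have "\<dots> \<le> measure_pmf.prob ?M {\<omega>. \<exists>i<n. \<omega> i \<notin> S}
                 + measure_pmf.prob ?M {\<omega>. pearson_stat P n S \<omega> \<ge> t - a}"
    by (rule measure_Un_le) auto
  also have "\<dots> \<le> a + real (card S) / (t - a)"
    using prob_iid_sample_not_in_le prob_pearson_stat_ge_le[OF S n pos] t
    unfolding a_def by (intro add_mono) auto
  finally show ?thesis
    unfolding a_def .
qed

lemma finite_pmf_ge:
  assumes c: "c > 0"
  shows "finite {y. pmf P y \<ge> c}"
proof (rule ccontr)
  assume "infinite {y. pmf P y \<ge> c}"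
  obtain k :: nat where k: "real k * c > 1"
    using reals_Archimedean3[OF c] by blast
  obtain F where F: "F \<subseteq> {y. pmf P y \<ge> c}" "finite F" "card F = k"
    using infinite_arbitrarily_large[OF \<open>infinite _\<close>] by blast
  have "real k * c = (\<Sum>y\<in>F. c)"
    using F by simp
  also have "\<dots> \<le> (\<Sum>y\<in>F. pmf P y)"
    using F by (intro sum_mono) auto
  also have "\<dots> = measure_pmf.prob P F"
    using F by (simp add: measure_measure_pmf_finite)
  also have "\<dots> \<le> 1"
    by simp
  finally show False
    using k by simp
qed

lemma tendsto_prob_loglik_ratio_gt:
  fixes S :: "nat \<Rightarrow> 'y set" and t :: "nat \<Rightarrow> real"
  assumes S: "eventually (\<lambda>n. finite (S n) \<and> (\<forall>y\<in>S n. pmf P y > 0)) sequentially"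
    and outside: "(\<lambda>n. real n * measure_pmf.prob P (- S n)) \<longlonglongrightarrow> 0"
    and card: "(\<lambda>n. real (card (S n)) / t n) \<longlonglongrightarrow> 0"
    and t: "filterlim t at_top sequentially"
  shows "(\<lambda>n. measure_pmf.prob (iid_sample P n) {\<omega>. \<bar>loglik_ratio P n \<omega>\<bar> > t n}) \<longlonglongrightarrow> 0"
proof (rule tendsto_sandwich[where f = "\<lambda>_. 0"])
  define a where "a = (\<lambda>n. real n * measure_pmf.prob P (- S n))"
  have "eventually (\<lambda>n. a n < 1) sequentially"
    using outside unfolding a_def by (rule order_tendstoD) simp
  moreover have "eventually (\<lambda>n. t n \<ge> 2) sequentially"
    using t by (simp add: filterlim_at_top)
  ultimately show "eventually (\<lambda>n. measure_pmf.prob (iid_sample P n) {\<omega>. \<bar>loglik_ratio P n \<omega>\<bar> > t n}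
      \<le> a n + 2 * (real (card (S n)) / t n)) sequentially"
    using S eventually_gt_at_top[of 0]
  proof eventually_elim
    case (elim n)
    then have "measure_pmf.prob (iid_sample P n) {\<omega>. \<bar>loglik_ratio P n \<omega>\<bar> > t n}
        \<le> a n + real (card (S n)) / (t n - a n)"
      unfolding a_def by (intro prob_loglik_ratio_gt_le) auto
    also have "real (card (S n)) / (t n - a n) \<le> real (card (S n)) / (t n / 2)"
      using elim by (intro divide_left_mono) auto
    finally show ?case
      by (simp add: ac_simps)
  qed
  have "(\<lambda>n. a n + 2 * (real (card (S n)) / t n)) \<longlonglongrightarrow> 0 + 2 * 0"
    unfolding a_def by (intro tendsto_intros outside card)
  then show "(\<lambda>n. a n + 2 * (real (card (S n)) / t n)) \<longlonglongrightarrow> 0"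
    by simp
qed simp_all

theorem proposition1:
  fixes G :: "real measure" and f :: "real \<Rightarrow> ('y::countable) pmf" and P :: "'y pmf"
    and \<epsilon> :: "nat \<Rightarrow> real" and \<alpha> :: real
  assumes G_prob: "prob_space G"
    and G_sets: "sets G = sets borel"
    and G_bounded: "\<exists>B. AE \<theta> in G. \<bar>\<theta>\<bar> \<le> B"
    and f_meas: "\<And>y. (\<lambda>\<theta>. pmf (f \<theta>) y) \<in> borel_measurable G"
    and P_mix: "\<And>y. pmf P y = (\<integral>\<theta>. pmf (f \<theta>) y \<partial>G)"
    and eps_pos: "\<And>n. \<epsilon> n > 0"
    and eps_lim: "\<epsilon> \<longlonglongrightarrow> 0"
    and cond_i: "(\<lambda>n. real n * measure_pmf.prob P (- {y. pmf P y \<ge> \<epsilon> n / real n}))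
                   \<longlonglongrightarrow> 0"
    and cond_ii: "(\<lambda>n. real (card {y. pmf P y \<ge> \<epsilon> n / real n})) \<in> O(\<lambda>n. ln (real n))"
    and alpha_pos: "\<alpha> > 0"
  shows "\<forall>\<delta>>0. (\<lambda>n. measure_pmf.prob (iid_sample P n)
            {\<omega>. \<bar>loglik_ratio P n \<omega>\<bar> > \<delta> * ln (real n) powr (1 + \<alpha>)}) \<longlonglongrightarrow> 0"
proof (intro allI impI)
  fix \<delta> :: real
  assume "\<delta> > 0"
  define t where "t = (\<lambda>n. \<delta> * ln (real n) powr (1 + \<alpha>))"
  have "eventually (\<lambda>n. \<epsilon> n / real n > 0) sequentially"
    using eventually_gt_at_top[of 0] by eventually_elim (simp add: eps_pos)
  then have "eventually (\<lambda>n. finite {y. pmf P y \<ge> \<epsilon> n / real n}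
                \<and> (\<forall>y\<in>{y. pmf P y \<ge> \<epsilon> n / real n}. pmf P y > 0)) sequentially"
    by eventually_elim (auto intro: finite_pmf_ge)
  moreover have "(\<lambda>n. ln (real n)) \<in> o(t)"
    unfolding t_def using \<open>\<delta> > 0\<close> alpha_pos by real_asymp
  then have "(\<lambda>n. real (card {y. pmf P y \<ge> \<epsilon> n / real n}) / t n) \<longlonglongrightarrow> 0"
    by (intro smalloD_tendsto landau_o.big_small_trans[OF cond_ii])
  moreover have "filterlim t at_top sequentially"
    unfolding t_def using \<open>\<delta> > 0\<close> alpha_pos by real_asymp
  ultimately show "(\<lambda>n. measure_pmf.prob (iid_sample P n) {\<omega>. \<bar>loglik_ratio P n \<omega>\<bar> > t n}) \<longlonglongrightarrow> 0"
    by (rule tendsto_prob_loglik_ratio_gt[OF _ cond_i])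
qed

end
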